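(* Assume $0\le l(\xi)\le C_l$ for all $\xi\in\Xi$. Run the SMC scheme described in the context with the exact loss $l$, starting from $m$ independent samples of $\rho_0$ with weights $1/m$. Then for every $t$ with $0\le t\le N-1$, $$h(\rho^E_{t+1},\rho_{t+1})\le\frac{1}{\sqrt{m}}\sum_{s=0}^{t+1}6^{\,t+1-s}\exp\big((W_{t+1}-W_s)C_l\big).$$ In particular, the final SMC approximation $\rho^E:=\rho^E_N$ of the Gibbs posterior $\rho=\rho_N$ satisfies $$h(\rho^E,\rho)\le\frac{1}{\sqrt m}\sum_{s=0}^N6^{N-s}\exp\big((W-W_s)C_l\big).$$
   Context: $\Xi\subseteq\mathbb{R}^M$ and $\rho_0$ is a prior probability distribution on $\Xi$. $l:\Xi\to\mathbb{R}$ is a loss function and $W>0$. For a probability measure $\mu$, $G_V\mu(d\xi)=\exp(-Vl(\xi))\mu(d\xi)/\int\exp(-Vl)\,d\mu$. Fix deterministic weights $0=W_0<W_1<\dots<W_N=W$ and set $\rho_t=G_{W_t}\rho_0$; thus $\rho=\rho_N$ is the Gibbs posterior. For each $t$, $\mathcal{K}_{t+1}$ is a Markov kernel on $\Xi$ leaving $\rho_{t+1}$ invariant. SMC scheme. Start with $\rho_0^E=\frac1m\sum_i\delta_{\xi_i^0}$, where $\xi_i^0$ are i.i.d. from $\rho_0$. Given $\rho_t^E=\sum_i w_i^t\delta_{\xi_i^t}$, iteration $t+1$ consists of three steps. (i) Reweight: $w_i^{t+1}\propto\exp(-(W_{t+1}-W_t)l(\xi_i^t))w_i^t$, normalized to sum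 to 1. This gives $\rho^E_{t+1,t}=\sum_iw_i^{t+1}\delta_{\xi_i^t}=G_{W_{t+1}-W_t}\rho_t^E$. (ii) Resample: draw $m$ particles $\xi_i^{t+1,t}$ conditionally i.i.d. from $\rho^E_{t+1,t}$, each with weight $1/m$. (iii) Mutate: move each resampled particle independently by $\mathcal{K}_{t+1}$, giving particles $\xi_i^{t+1}$ and $\rho^E_{t+1}=\frac1m\sum_i\delta_{\xi_i^{t+1}}$. For a probability measure $\mu$ and a bounded $f$, $\mu[f]=\int f\,d\mu$. For two possibly random probability measures $\rho_1,\rho_2$, $h(\rho_1,\rho_2)=\sup_f\sqrt{\mathbb{E}|\rho_1[f]-\rho_2[f]|^2}$. The supremum is over measurable $f$ with $\sup|f|\le1$, and the expectation is over all randomness of the algorithm. *)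

theory Defs
  imports "HOL-Probability.Probability"
begin

definition gibbs :: "('a \<Rightarrow> real) \<Rightarrow> real \<Rightarrow> 'a measure \<Rightarrow> 'a measure" where
  "gibbs l V \<mu> = density \<mu> (\<lambda>x. ennreal (exp (- V * l x) / (\<integral>y. exp (- V * l y) \<partial>\<mu>)))"

definition emp_mean :: "nat \<Rightarrow> ('a \<Rightarrow> real) \<Rightarrow> (nat \<Rightarrow> 'a) \<Rightarrow> real" where
  "emp_mean m f x = (\<Sum>i<m. f (x i)) / real m"

definition smc_weight :: "nat \<Rightarrow> ('a \<Rightarrow> real) \<Rightarrow> (nat \<Rightarrow> real) \<Rightarrow> nat \<Rightarrow> (nat \<Rightarrow> 'a) \<Rightarrow> nat \<Rightarrow> real" where
  "smc_weight m l W t x j =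
     exp (- (W (Suc t) - W t) * l (x j)) / (\<Sum>k<m. exp (- (W (Suc t) - W t) * l (x k)))"

text \<open>One SMC iteration t -> t+1 on the particle vector x:
  (ii) resample m indices J_i conditionally i.i.d. with probabilities smc_weight (after the
  reweighting step (i)), (iii) mutate each resampled particle x (J i) independently by K (t+1).\<close>
definition smc_step :: "'a measure \<Rightarrow> nat \<Rightarrow> ('a \<Rightarrow> real) \<Rightarrow> (nat \<Rightarrow> real) \<Rightarrow> (nat \<Rightarrow> 'a \<Rightarrow> 'a measure)
     \<Rightarrow> nat \<Rightarrow> (nat \<Rightarrow> 'a) \<Rightarrow> (nat \<Rightarrow> 'a) measure" where
  "smc_step S m l W K t x =
     (PiM {..<m} (\<lambda>_. point_measure {..<m} (\<lambda>j. ennreal (smc_weight m l W t x j))))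
       \<bind> (\<lambda>J. PiM {..<m} (\<lambda>i. K (Suc t) (x (J i))))"

primrec smc_law :: "'a measure \<Rightarrow> nat \<Rightarrow> ('a \<Rightarrow> real) \<Rightarrow> (nat \<Rightarrow> real) \<Rightarrow> (nat \<Rightarrow> 'a \<Rightarrow> 'a measure)
     \<Rightarrow> 'a measure \<Rightarrow> nat \<Rightarrow> (nat \<Rightarrow> 'a) measure" where
  "smc_law S m l W K \<rho>0 0 = PiM {..<m} (\<lambda>_. \<rho>0)"
| "smc_law S m l W K \<rho>0 (Suc t) = smc_law S m l W K \<rho>0 t \<bind> smc_step S m l W K t"

text \<open>h(rho^E, rho) where rho^E is the (random) equally weighted empirical measure of a particle
  vector with law P: sup over measurable f with sup |f| <= 1 of sqrt(E |rho^E[f] - rho[f]|^2).\<close>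
definition smc_h :: "'a measure \<Rightarrow> nat \<Rightarrow> (nat \<Rightarrow> 'a) measure \<Rightarrow> 'a measure \<Rightarrow> real" where
  "smc_h S m P \<rho> = (SUP f \<in> {f \<in> borel_measurable S. \<forall>x\<in>space S. \<bar>f x\<bar> \<le> 1}.
       sqrt (\<integral>x. (emp_mean m f x - (\<integral>y. f y \<partial>\<rho>))\<^sup>2 \<partial>P))"

end

theory Submission
  imports Defs
begin

text \<open>
  One iteration of the scheme is analysed conditionally on the current particles. Resampling and
  mutation each draw m conditionally independent particles, and an average of m independent
  [-1, 1]-valued variables has variance at most 1/m, so together they add at most 2/m to the
  mean squared error of a test function bounded by 1. What remains is the error of the
  self-normalised estimate A1/A0 of the next posterior, whose exact value is B1/B0 because the
  kernel leaves the next posterior invariant and the next posterior is the reweighted current one.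
  The weights exp(-(W(t+1) - W t) l) lie in [exp(-(W(t+1) - W t) C), 1], which gives
  |A1/A0 - B1/B0| \<le> exp((W(t+1) - W t) C) (|A1 - B1| + |A0 - B0|), and A1, A0 are empirical means
  of test functions bounded by 1. The worst-case mean squared errors e_t therefore satisfy
  e_(t+1) \<le> 4 exp(2 (W(t+1) - W t) C) e_t + 2/m with e_0 \<le> 1/m, so e_t \<le> B_t^2/m for
  B_0 = 1, B_(t+1) = 1 + 6 exp((W(t+1) - W t) C) B_t, and B_t is the sum in the statement.
\<close>

section \<open>Empirical means of independent bounded samples\<close>

lemma finite_measure_integrable_bounded:
  fixes f :: "'a \<Rightarrow> real"
  assumes "finite_measure M" "f \<in> borel_measurable M" "\<And>x. x \<in> space M \<Longrightarrow> \<bar>f x\<bar> \<le> B"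
  shows "integrable M f"
  using assms by (intro finite_measure.integrable_const_bound[where B=B]) (auto intro!: AE_I2)

lemma prob_space_abs_integral_le_1:
  fixes f :: "'a \<Rightarrow> real"
  assumes "prob_space M" "f \<in> borel_measurable M" "\<And>x. x \<in> space M \<Longrightarrow> \<bar>f x\<bar> \<le> 1"
  shows "\<bar>\<integral>x. f x \<partial>M\<bar> \<le> 1"
  using assms
  by (intro integral_abs_bound[THEN order_trans] prob_space.integral_le_const
        finite_measure_integrable_bounded[where B=1] prob_space.finite_measure)
     (auto intro!: AE_I2)

lemma integral_bind_bounded:
  fixes f :: "'b \<Rightarrow> real"
  assumes "prob_space M" "N \<in> M \<rightarrow>\<^sub>M subprob_algebra K"
    and "f \<in> borel_measurable K" "\<And>x. x \<in> space K \<Longrightarrow> \<bar>f x\<bar> \<le> B"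
  shows "(\<integral>y. f y \<partial>(M \<bind> N)) = (\<integral>x. (\<integral>y. f y \<partial>N x) \<partial>M)"
  using assms
  by (intro integral_bind[where B'=1] prob_space.finite_measure AE_I2)
     (auto simp: subprob_space.emeasure_space_le_1 subprob_space_kernel)

lemma abs_square_diff_le:
  fixes a c :: real
  assumes "\<bar>a\<bar> \<le> 1"
  shows "\<bar>(a - c)\<^sup>2\<bar> \<le> (1 + \<bar>c\<bar>)\<^sup>2"
proof -
  have "\<bar>a - c\<bar> \<le> \<bar>1 + \<bar>c\<bar>\<bar>"
    using assms by linarith
  then show ?thesis
    by (simp only: abs_le_square_iff abs_power2)
qed

lemma (in product_prob_space) integral_PiM_component:
  fixes g :: "'a \<Rightarrow> real"
  assumes "i \<in> I" "g \<in> borel_measurable (M i)"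
  shows "(\<integral>\<omega>. g (\<omega> i) \<partial>PiM I M) = (\<integral>x. g x \<partial>M i)"
proof -
  have "(\<integral>x. g x \<partial>M i) = (\<integral>x. g x \<partial>distr (PiM I M) (M i) (\<lambda>\<omega>. \<omega> i))"
    by (simp add: PiM_component assms(1))
  also have "\<dots> = (\<integral>\<omega>. g (\<omega> i) \<partial>PiM I M)"
    using assms by (subst integral_distr) (auto intro: measurable_component_singleton)
  finally show ?thesis ..
qed

lemma prod_if_two_points:
  fixes a b :: "'i \<Rightarrow> 'b::comm_monoid_mult"
  assumes "finite I" "i \<in> I" "k \<in> I" "i \<noteq> k"
  shows "(\<Prod>j\<in>I. if j = i then a j else if j = k then b j else 1) = a i * b k"
  using assms by (simp add: prod.remove[of I i] prod.delta)

lemma (in product_prob_space) integral_PiM_two_components: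
  fixes g h :: "'a \<Rightarrow> real"
  assumes "finite I" "i \<in> I" "k \<in> I" "i \<noteq> k"
    and "integrable (M i) g" "integrable (M k) h"
  shows "(\<integral>\<omega>. g (\<omega> i) * h (\<omega> k) \<partial>PiM I M) = (\<integral>x. g x \<partial>M i) * (\<integral>x. h x \<partial>M k)"
proof -
  define F where "F j = (if j = i then g else if j = k then h else (\<lambda>_. 1))" for j
  have F: "F j x = (if j = i then g x else if j = k then h x else 1)" for j x
    by (simp add: F_def)
  have "(\<integral>\<omega>. g (\<omega> i) * h (\<omega> k) \<partial>PiM I M) = (\<integral>\<omega>. (\<Prod>j\<in>I. F j (\<omega> j)) \<partial>PiM I M)"
    using assms by (simp add: F prod_if_two_points)
  also have "\<dots> = (\<Prod>j\<in>I. integral\<^sup>L (M j) (F j))"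
    using assms by (intro product_integral_prod) (auto simp: F_def)
  also have "\<dots> = (\<Prod>j\<in>I. if j = i then (\<integral>x. g x \<partial>M i) else if j = k then (\<integral>x. h x \<partial>M k) else 1)"
    by (intro prod.cong) (auto simp: F_def M.prob_space)
  also have "\<dots> = (\<integral>x. g x \<partial>M i) * (\<integral>x. h x \<partial>M k)"
    by (rule prod_if_two_points[OF assms(1-4)])
  finally show ?thesis .
qed

lemma (in prob_space) integral_square_sum_uncorrelated:
  fixes Z :: "'i \<Rightarrow> 'a \<Rightarrow> real"
  assumes "finite A" and integrable: "\<And>i k. i \<in> A \<Longrightarrow> k \<in> A \<Longrightarrow> integrable M (\<lambda>x. Z i x * Z k x)"
    and uncorrelated: "\<And>i k. i \<in> A \<Longrightarrow> k \<in> A \<Longrightarrow> i \<noteq> k \<Longrightarrow> (\<integral>x. Z i x * Z k x \<partial>M) = 0"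
  shows "(\<integral>x. (\<Sum>i\<in>A. Z i x)\<^sup>2 \<partial>M) = (\<Sum>i\<in>A. \<integral>x. (Z i x)\<^sup>2 \<partial>M)"
proof -
  have "(\<integral>x. (\<Sum>i\<in>A. Z i x)\<^sup>2 \<partial>M) = (\<integral>x. (\<Sum>i\<in>A. \<Sum>k\<in>A. Z i x * Z k x) \<partial>M)"
    by (simp add: power2_eq_square sum_product)
  also have "\<dots> = (\<Sum>i\<in>A. \<Sum>k\<in>A. \<integral>x. Z i x * Z k x \<partial>M)"
    using integrable by (simp add: Bochner_Integration.integral_sum Bochner_Integration.integrable_sum)
  also have "\<dots> = (\<Sum>i\<in>A. \<integral>x. Z i x * Z i x \<partial>M)"
  proof (rule sum.cong[OF refl])
    fix i assume "i \<in> A"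
    then show "(\<Sum>k\<in>A. \<integral>x. Z i x * Z k x \<partial>M) = (\<integral>x. Z i x * Z i x \<partial>M)"
      using assms by (subst sum.remove[of A i]) (auto intro!: sum.neutral)
  qed
  finally show ?thesis by (simp add: power2_eq_square)
qed

lemma (in prob_space) integral_centered_square_le_1:
  fixes f :: "'a \<Rightarrow> real"
  assumes "f \<in> borel_measurable M" "\<And>x. x \<in> space M \<Longrightarrow> \<bar>f x\<bar> \<le> 1"
  shows "(\<integral>x. (f x - expectation f)\<^sup>2 \<partial>M) \<le> 1"
proof -
  have sq: "\<bar>(f x)\<^sup>2\<bar> \<le> 1" if "x \<in> space M" for x
    using assms(2)[OF that] by (simp add: abs_square_le_1)
  have "integrable M f" "integrable M (\<lambda>x. (f x)\<^sup>2)"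
    using assms sq by (auto intro!: finite_measure_integrable_bounded[where B=1] finite_measure_axioms)
  then have "(\<integral>x. (f x - expectation f)\<^sup>2 \<partial>M) = expectation (\<lambda>x. (f x)\<^sup>2) - (expectation f)\<^sup>2"
    using variance_eq by simp
  also have "\<dots> \<le> expectation (\<lambda>x. (f x)\<^sup>2)" by simp
  also have "\<dots> \<le> 1"
    using \<open>integrable M (\<lambda>x. (f x)\<^sup>2)\<close> sq by (intro integral_le_const) (auto intro!: AE_I2)
  finally show ?thesis .
qed

lemma (in product_prob_space) centered_sum_moments:
  fixes f :: "'i \<Rightarrow> 'a \<Rightarrow> real"
  assumes "finite I" and f_meas: "\<And>i. i \<in> I \<Longrightarrow> f i \<in> borel_measurable (M i)"
    and f_bound: "\<And>i x. i \<in> I \<Longrightarrow> x \<in> space (M i) \<Longrightarrow> \<bar>f i x\<bar> \<le> 1"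
  defines "X \<equiv> \<lambda>y. \<Sum>i\<in>I. f i (y i) - (\<integral>z. f i z \<partial>M i)"
  shows "integrable (PiM I M) X" and "integrable (PiM I M) (\<lambda>y. (X y)\<^sup>2)"
    and "(\<integral>y. X y \<partial>PiM I M) = 0" and "(\<integral>y. (X y)\<^sup>2 \<partial>PiM I M) \<le> card I"
proof -
  define Z where "Z i y = f i (y i) - (\<integral>z. f i z \<partial>M i)" for i y
  have X_eq: "X = (\<lambda>y. \<Sum>i\<in>I. Z i y)"
    by (simp add: X_def Z_def)
  have f_int: "integrable (M i) (f i)" if "i \<in> I" for i
    using f_meas[OF that] f_bound[OF that] by (intro finite_measure_integrable_bounded[where B=1]) auto
  have Z_meas: "Z i \<in> borel_measurable (PiM I M)" if "i \<in> I" for i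
    unfolding Z_def using that f_meas by measurable
  have Z_bound: "\<bar>Z i y\<bar> \<le> 2" if "i \<in> I" "y \<in> space (PiM I M)" for i y
    using that f_bound[OF that(1)] prob_space_abs_integral_le_1[OF M.prob_space_axioms f_meas f_bound]
    unfolding Z_def by (fastforce simp: space_PiM)
  have Z_int: "integrable (PiM I M) (Z i)" if "i \<in> I" for i
    using Z_meas Z_bound that by (intro finite_measure_integrable_bounded[where B=2] finite_measure_axioms) auto
  have ZZ_int: "integrable (PiM I M) (\<lambda>y. Z i y * Z k y)" if "i \<in> I" "k \<in> I" for i k
  proof (rule finite_measure_integrable_bounded[where B="2 * 2"])
    fix y assume "y \<in> space (PiM I M)"
    then show "\<bar>Z i y * Z k y\<bar> \<le> 2 * 2"
      unfolding abs_mult using Z_bound that by (intro mult_mono) auto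
  qed (use Z_meas that in \<open>auto intro: finite_measure_axioms\<close>)
  show "integrable (PiM I M) X" "integrable (PiM I M) (\<lambda>y. (X y)\<^sup>2)"
    unfolding X_eq power2_eq_square sum_product using Z_int ZZ_int
    by (auto intro!: Bochner_Integration.integrable_sum)
  have Z_centered: "(\<integral>y. Z i y \<partial>PiM I M) = 0" if "i \<in> I" for i
    using that f_meas[OF that] f_int[OF that] unfolding Z_def
    by (subst integral_PiM_component[where g="\<lambda>z. f i z - (\<integral>z. f i z \<partial>M i)"]) (auto simp: M.prob_space)
  show "(\<integral>y. X y \<partial>PiM I M) = 0"
    unfolding X_eq using Z_int Z_centered by (simp add: Bochner_Integration.integral_sum)
  have Z_uncorrelated: "(\<integral>y. Z i y * Z k y \<partial>PiM I M) = 0" if "i \<in> I" "k \<in> I" "i \<noteq> k" for i k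
    using that f_int \<open>finite I\<close> unfolding Z_def
    by (subst integral_PiM_two_components[where g="\<lambda>z. f i z - (\<integral>z. f i z \<partial>M i)"
          and h="\<lambda>z. f k z - (\<integral>z. f k z \<partial>M k)"]) (auto simp: M.prob_space)
  have Z_square: "(\<integral>y. (Z i y)\<^sup>2 \<partial>PiM I M) \<le> 1" if "i \<in> I" for i
    using that f_meas[OF that] f_bound[OF that] unfolding Z_def
    by (subst integral_PiM_component[where g="\<lambda>z. (f i z - (\<integral>z. f i z \<partial>M i))\<^sup>2"])
       (auto intro!: M.integral_centered_square_le_1)
  have "(\<integral>y. (X y)\<^sup>2 \<partial>PiM I M) = (\<Sum>i\<in>I. \<integral>y. (Z i y)\<^sup>2 \<partial>PiM I M)"
    unfolding X_eq using \<open>finite I\<close> ZZ_int Z_uncorrelated by (intro integral_square_sum_uncorrelated) auto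
  also have "\<dots> \<le> (\<Sum>i\<in>I. 1)"
    using Z_square by (intro sum_mono) auto
  finally show "(\<integral>y. (X y)\<^sup>2 \<partial>PiM I M) \<le> card I"
    by simp
qed

lemma (in prob_space) integral_square_add_const:
  fixes X :: "'a \<Rightarrow> real"
  assumes "integrable M X" "integrable M (\<lambda>x. (X x)\<^sup>2)"
  shows "(\<integral>x. (X x + d)\<^sup>2 \<partial>M) = (\<integral>x. (X x)\<^sup>2 \<partial>M) + 2 * d * expectation X + d\<^sup>2"
  using assms by (simp add: power2_sum prob_space)

lemma PiM_emp_mean_square_deviation_le:
  fixes M :: "nat \<Rightarrow> 'a measure" and f :: "'a \<Rightarrow> real"
  assumes m: "0 < m" and prob: "\<And>i. i < m \<Longrightarrow> prob_space (M i)"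
    and f_meas: "\<And>i. i < m \<Longrightarrow> f \<in> borel_measurable (M i)"
    and f_bound: "\<And>i x. i < m \<Longrightarrow> x \<in> space (M i) \<Longrightarrow> \<bar>f x\<bar> \<le> 1"
  shows "(\<integral>y. (emp_mean m f y - c)\<^sup>2 \<partial>PiM {..<m} M)
          \<le> ((\<Sum>i<m. \<integral>z. f z \<partial>M i) / m - c)\<^sup>2 + 1 / m"
proof -
  \<comment> \<open>Only the factors below m matter; padding the family gives a product of probability spaces.\<close>
  define M' where "M' i = (if i < m then M i else M 0)" for i
  have PiM_padded: "PiM {..<m} M = PiM {..<m} M'"
    by (rule PiM_cong) (auto simp: M'_def)
  interpret product_prob_space M' "{..<m}"
    using prob m by (auto simp: product_prob_space_def product_prob_space_axioms_def
        product_sigma_finite_def prob_space_imp_sigma_finite M'_def)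
  define X where "X y = (\<Sum>i<m. f (y i) - (\<integral>z. f z \<partial>M' i))" for y
  define d where "d = (\<Sum>i<m. \<integral>z. f z \<partial>M i) / m - c"
  have "integrable (PiM {..<m} M') X" "integrable (PiM {..<m} M') (\<lambda>y. (X y)\<^sup>2)"
    and X_centered: "(\<integral>y. X y \<partial>PiM {..<m} M') = 0" and X_square: "(\<integral>y. (X y)\<^sup>2 \<partial>PiM {..<m} M') \<le> m"
    unfolding X_def[abs_def] using f_meas f_bound
    by (intro centered_sum_moments[where f="\<lambda>_. f", simplified]; auto simp: M'_def)+
  moreover have "emp_mean m f y - c = X y / m + d" for y
    using m by (simp add: emp_mean_def X_def d_def M'_def sum_subtractf diff_divide_distrib)
  ultimately have "(\<integral>y. (emp_mean m f y - c)\<^sup>2 \<partial>PiM {..<m} M') = (\<integral>y. (X y)\<^sup>2 \<partial>PiM {..<m} M') / m\<^sup>2 + d\<^sup>2"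
    by (simp add: integral_square_add_const power_divide)
  also have "\<dots> \<le> m / m\<^sup>2 + d\<^sup>2"
    using X_square by (simp add: divide_right_mono)
  also have "\<dots> = 1 / m + d\<^sup>2"
    by (simp add: power2_eq_square)
  finally show ?thesis
    by (subst PiM_padded) (simp add: d_def)
qed

lemma abs_emp_mean_le_1:
  assumes "0 < m" "\<And>i. i < m \<Longrightarrow> \<bar>f (y i)\<bar> \<le> 1"
  shows "\<bar>emp_mean m f y\<bar> \<le> 1"
proof -
  have "\<bar>\<Sum>i<m. f (y i)\<bar> \<le> (\<Sum>i<m. 1)"
    using assms by (intro order_trans[OF sum_abs] sum_mono) auto
  then show ?thesis
    using assms(1) by (simp add: emp_mean_def abs_divide divide_le_eq)
qed

lemma emp_mean_ge:
  assumes "0 < m" "\<And>i. i < m \<Longrightarrow> a \<le> f (y i)"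
  shows "a \<le> emp_mean m f y"
proof -
  have "(\<Sum>i<m. a) \<le> (\<Sum>i<m. f (y i))"
    using assms by (intro sum_mono) auto
  then show ?thesis
    using assms(1) by (simp add: emp_mean_def le_divide_eq mult.commute)
qed

lemma measurable_emp_mean:
  assumes "f \<in> borel_measurable N"
  shows "emp_mean m f \<in> borel_measurable (PiM {..<m} (\<lambda>_. N))"
  unfolding emp_mean_def[abs_def]
  using assms by (intro borel_measurable_divide borel_measurable_sum measurable_const
      measurable_compose[OF measurable_component_singleton[of _ _ "\<lambda>_. N"] assms]) auto

lemma integrable_emp_mean_square_deviation:
  fixes g :: "'a \<Rightarrow> real"
  assumes "finite_measure P" "sets P = sets (PiM {..<m} (\<lambda>_. N))" "0 < m"
    and "g \<in> borel_measurable N" "\<And>z. z \<in> space N \<Longrightarrow> \<bar>g z\<bar> \<le> 1"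
  shows "integrable P (\<lambda>x. (emp_mean m g x - c)\<^sup>2)"
  using assms sets_eq_imp_space_eq[OF assms(2)]
  by (intro finite_measure_integrable_bounded[where B="(1 + \<bar>c\<bar>)\<^sup>2"] abs_square_diff_le abs_emp_mean_le_1
      borel_measurable_power borel_measurable_diff measurable_const)
     (auto simp: measurable_cong_sets[OF assms(2) refl] space_PiM intro: measurable_emp_mean)

lemma measurable_PiM_kernels:
  fixes k :: "'i \<Rightarrow> 'b \<Rightarrow> 'a measure"
  assumes "finite I"
    and k_meas: "\<And>i. i \<in> I \<Longrightarrow> k i \<in> M \<rightarrow>\<^sub>M subprob_algebra N"
    and k_prob: "\<And>i x. i \<in> I \<Longrightarrow> x \<in> space M \<Longrightarrow> prob_space (k i x)"
  shows "(\<lambda>x. PiM I (\<lambda>i. k i x)) \<in> M \<rightarrow>\<^sub>M subprob_algebra (PiM I (\<lambda>_. N))"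
proof (rule measurable_subprob_algebra_generated[where \<Omega>="\<Pi>\<^sub>E i\<in>I. space N" and G="prod_algebra I (\<lambda>_. N)"])
  have space_k: "space (k i x) = space N" if "i \<in> I" "x \<in> space M" for i x
    using sets_kernel[OF k_meas[OF that(1)] that(2)] by (rule sets_eq_imp_space_eq)
  show "sets (PiM I (\<lambda>_. N)) = sigma_sets (\<Pi>\<^sub>E i\<in>I. space N) (prod_algebra I (\<lambda>_. N))"
    by (rule sets_PiM)
  show "Int_stable (prod_algebra I (\<lambda>_. N))"
    by (rule Int_stable_prod_algebra)
  show "prod_algebra I (\<lambda>_. N) \<subseteq> Pow (\<Pi>\<^sub>E i\<in>I. space N)"
    by (rule prod_algebra_sets_into_space)
  show "subprob_space (PiM I (\<lambda>i. k i a))" if "a \<in> space M" for a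
    using that k_prob by (auto intro!: prob_space_imp_subprob_space prob_space_PiM)
  show "sets (PiM I (\<lambda>i. k i a)) = sets (PiM I (\<lambda>_. N))" if "a \<in> space M" for a
    using that sets_kernel[OF k_meas] by (intro sets_PiM_cong) auto
  show "(\<lambda>x. emeasure (PiM I (\<lambda>i. k i x)) (\<Pi>\<^sub>E i\<in>I. space N)) \<in> borel_measurable M"
  proof (subst measurable_cong[where g="\<lambda>_. 1"])
    fix x assume x: "x \<in> space M"
    interpret prob_space "PiM I (\<lambda>i. k i x)"
      using k_prob[OF _ x] by (intro prob_space_PiM) auto
    have "(\<Pi>\<^sub>E i\<in>I. space N) = space (PiM I (\<lambda>i. k i x))"
      using space_k[OF _ x] unfolding space_PiM by (intro PiE_cong) auto
    then show "emeasure (PiM I (\<lambda>i. k i x)) (\<Pi>\<^sub>E i\<in>I. space N) = 1"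
      by (simp add: emeasure_space_1)
  qed simp
  fix A assume "A \<in> prod_algebra I (\<lambda>_. N)"
  then obtain E where A: "A = Pi\<^sub>E I E" and E: "E \<in> (\<Pi> i\<in>I. sets N)"
    by (rule prod_algebraE_all)
  have "emeasure (PiM I (\<lambda>i. k i x)) A = (\<Prod>i\<in>I. emeasure (k i x) (E i))" if x: "x \<in> space M" for x
  proof -
    have E_k: "E i \<in> sets (k i x)" if "i \<in> I" for i
      using E that sets_kernel[OF k_meas[OF that] x] by auto
    have "A = prod_emb I (\<lambda>i. k i x) I (Pi\<^sub>E I E)"
      unfolding A by (rule prod_emb_PiE_same_index[symmetric]) (use E_k sets.sets_into_space in auto)
    then show ?thesis
      using emeasure_PiM_emb[of I "\<lambda>i. k i x" I E] k_prob[OF _ x] E_k \<open>finite I\<close> by auto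
  qed
  moreover have "(\<lambda>x. \<Prod>i\<in>I. emeasure (k i x) (E i)) \<in> borel_measurable M"
    using E by (intro borel_measurable_prod_ennreal measurable_emeasure_kernel[OF k_meas]) auto
  ultimately show "(\<lambda>x. emeasure (PiM I (\<lambda>i. k i x)) A) \<in> borel_measurable M"
    by (subst measurable_cong) auto
qed

section \<open>Resampling and one iteration of the algorithm\<close>

abbreviation resample_measure ::
    "nat \<Rightarrow> ('a \<Rightarrow> real) \<Rightarrow> (nat \<Rightarrow> real) \<Rightarrow> nat \<Rightarrow> (nat \<Rightarrow> 'a) \<Rightarrow> nat measure" where
  "resample_measure m l W t x \<equiv> point_measure {..<m} (\<lambda>j. ennreal (smc_weight m l W t x j))"

lemma smc_weight_pos: "0 < m \<Longrightarrow> 0 < smc_weight m l W t x j"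
  unfolding smc_weight_def by (intro divide_pos_pos exp_gt_zero sum_pos) auto

lemma sum_smc_weight:
  assumes "0 < m" shows "(\<Sum>j<m. smc_weight m l W t x j) = 1"
proof -
  have "0 < (\<Sum>k<m. exp (- (W (Suc t) - W t) * l (x k)))"
    using assms by (intro sum_pos) auto
  then show ?thesis
    unfolding smc_weight_def sum_divide_distrib[symmetric] by simp
qed

lemma prob_space_resample_measure: "0 < m \<Longrightarrow> prob_space (resample_measure m l W t x)"
  by (rule prob_space_point_measure)
     (auto simp: sum_ennreal smc_weight_pos less_imp_le sum_smc_weight)

lemma measurable_smc_weight:
  assumes l: "l \<in> borel_measurable S" and "j < m"
  shows "(\<lambda>x. smc_weight m l W t x j) \<in> borel_measurable (PiM {..<m} (\<lambda>_. S))"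
proof -
  have "(\<lambda>x. l (x k)) \<in> borel_measurable (PiM {..<m} (\<lambda>_. S))" if "k < m" for k
    using that by (intro measurable_compose[OF measurable_component_singleton[of k _ "\<lambda>_. S"] l]) auto
  then show ?thesis
    unfolding smc_weight_def using \<open>j < m\<close>
    by (intro borel_measurable_divide borel_measurable_sum measurable_compose[OF _ borel_measurable_exp]
        borel_measurable_times measurable_const) auto
qed

lemma measurable_resample_measure:
  assumes "l \<in> borel_measurable S" "0 < m"
  shows "(\<lambda>x. resample_measure m l W t x) \<in> PiM {..<m} (\<lambda>_. S) \<rightarrow>\<^sub>M subprob_algebra (count_space {..<m})"
proof (rule measurable_subprob_algebra)
  show "subprob_space (resample_measure m l W t x)" for x
    using assms(2) by (intro prob_space_imp_subprob_space prob_space_resample_measure)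
  fix A assume "A \<in> sets (count_space {..<m})"
  moreover have "(\<lambda>x. \<Sum>j\<in>A. ennreal (smc_weight m l W t x j)) \<in> borel_measurable (PiM {..<m} (\<lambda>_. S))"
    if "A \<subseteq> {..<m}"
    using that assms by (intro borel_measurable_sum measurable_compose[OF measurable_smc_weight measurable_ennreal]) auto
  ultimately show "(\<lambda>x. emeasure (resample_measure m l W t x) A) \<in> borel_measurable (PiM {..<m} (\<lambda>_. S))"
    by (subst emeasure_point_measure_finite) auto
qed (simp add: sets_point_measure)

lemma sum_smc_weight_mult:
  assumes "0 < m"
  shows "(\<Sum>j<m. smc_weight m l W t x j * g (x j))
    = emp_mean m (\<lambda>y. exp (- (W (Suc t) - W t) * l y) * g y) x / emp_mean m (\<lambda>y. exp (- (W (Suc t) - W t) * l y)) x"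
  using assms by (simp add: smc_weight_def emp_mean_def sum_divide_distrib[symmetric])

lemma resampling_mean_square_deviation_le:
  assumes m: "0 < m" and g: "\<And>j. j < m \<Longrightarrow> \<bar>g j\<bar> \<le> 1"
  shows "(\<integral>J. (emp_mean m g J - c)\<^sup>2 \<partial>PiM {..<m} (\<lambda>_. resample_measure m l W t x))
     \<le> ((\<Sum>j<m. smc_weight m l W t x j * g j) - c)\<^sup>2 + 1 / m"
proof -
  have "(\<integral>j. g j \<partial>resample_measure m l W t x) = (\<Sum>j<m. smc_weight m l W t x j * g j)"
    using m by (simp add: lebesgue_integral_point_measure_finite smc_weight_pos less_imp_le)
  moreover have "(\<integral>J. (emp_mean m g J - c)\<^sup>2 \<partial>PiM {..<m} (\<lambda>_. resample_measure m l W t x))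
      \<le> ((\<Sum>i<m. \<integral>j. g j \<partial>resample_measure m l W t x) / m - c)\<^sup>2 + 1 / m"
    using m g by (intro PiM_emp_mean_square_deviation_le prob_space_resample_measure)
      (auto simp: space_point_measure)
  ultimately show ?thesis
    using m by simp
qed

lemma measurable_select_component:
  fixes m :: nat
  assumes "i < m"
  shows "(\<lambda>z. fst z (snd z i)) \<in> PiM {..<m} (\<lambda>_. S) \<Otimes>\<^sub>M PiM {..<m} (\<lambda>_. count_space {..<m}) \<rightarrow>\<^sub>M S"
proof (rule measurable_compose_countable'[where I="{..<m}" and f="\<lambda>j z. fst z j" and g="\<lambda>z. snd z i"])
  show "(\<lambda>z. fst z j) \<in> PiM {..<m} (\<lambda>_. S) \<Otimes>\<^sub>M PiM {..<m} (\<lambda>_. count_space {..<m}) \<rightarrow>\<^sub>M S"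
    if "j \<in> {..<m}" for j
    using that by (intro measurable_compose[OF measurable_fst measurable_component_singleton]) auto
  show "(\<lambda>z. snd z i) \<in> PiM {..<m} (\<lambda>_. S) \<Otimes>\<^sub>M PiM {..<m} (\<lambda>_. count_space {..<m}) \<rightarrow>\<^sub>M count_space {..<m}"
    using assms by (intro measurable_compose[OF measurable_snd measurable_component_singleton]) auto
qed auto

locale smc_step_kernel =
  fixes S :: "'a measure" and m :: nat and l :: "'a \<Rightarrow> real" and W :: "nat \<Rightarrow> real"
    and K :: "nat \<Rightarrow> 'a \<Rightarrow> 'a measure" and t :: nat
  assumes m: "0 < m" and l_meas: "l \<in> borel_measurable S"
    and K_meas: "K (Suc t) \<in> S \<rightarrow>\<^sub>M subprob_algebra S"
    and K_prob: "\<And>x. x \<in> space S \<Longrightarrow> prob_space (K (Suc t) x)"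
begin

lemma measurable_mutation:
  "(\<lambda>(x, J). PiM {..<m} (\<lambda>i. K (Suc t) (x (J i))))
     \<in> PiM {..<m} (\<lambda>_. S) \<Otimes>\<^sub>M PiM {..<m} (\<lambda>_. count_space {..<m}) \<rightarrow>\<^sub>M subprob_algebra (PiM {..<m} (\<lambda>_. S))"
  unfolding case_prod_beta
proof (rule measurable_PiM_kernels)
  fix i assume "i \<in> {..<m}"
  then have "(\<lambda>z. fst z (snd z i)) \<in> PiM {..<m} (\<lambda>_. S) \<Otimes>\<^sub>M PiM {..<m} (\<lambda>_. count_space {..<m}) \<rightarrow>\<^sub>M S"
    by (simp add: measurable_select_component)
  then show "(\<lambda>z. K (Suc t) (fst z (snd z i))) \<in> PiM {..<m} (\<lambda>_. S) \<Otimes>\<^sub>M PiM {..<m} (\<lambda>_. count_space {..<m}) \<rightarrow>\<^sub>M subprob_algebra S"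
    and "\<And>z. z \<in> space (PiM {..<m} (\<lambda>_. S) \<Otimes>\<^sub>M PiM {..<m} (\<lambda>_. count_space {..<m})) \<Longrightarrow> prob_space (K (Suc t) (fst z (snd z i)))"
    by (auto intro: measurable_compose[OF _ K_meas] K_prob measurable_space)
qed simp

lemma measurable_mutation_at:
  assumes "x \<in> space (PiM {..<m} (\<lambda>_. S))"
  shows "(\<lambda>J. PiM {..<m} (\<lambda>i. K (Suc t) (x (J i))))
    \<in> PiM {..<m} (\<lambda>_. resample_measure m l W t x) \<rightarrow>\<^sub>M subprob_algebra (PiM {..<m} (\<lambda>_. S))"
  using measurable_compose[OF measurable_Pair1'[OF assms] measurable_mutation]
  by (simp cong: measurable_cong_sets add: sets_PiM_cong sets_point_measure)

lemma measurable_smc_step: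
  "smc_step S m l W K t \<in> PiM {..<m} (\<lambda>_. S) \<rightarrow>\<^sub>M subprob_algebra (PiM {..<m} (\<lambda>_. S))"
proof -
  have "(\<lambda>x. PiM {..<m} (\<lambda>_. resample_measure m l W t x))
      \<in> PiM {..<m} (\<lambda>_. S) \<rightarrow>\<^sub>M subprob_algebra (PiM {..<m} (\<lambda>_. count_space {..<m}))"
    using m l_meas by (intro measurable_PiM_kernels measurable_resample_measure prob_space_resample_measure) auto
  then show ?thesis
    unfolding smc_step_def by (rule measurable_bind) (use measurable_mutation in \<open>simp add: case_prod_beta\<close>)
qed

lemma prob_space_smc_step:
  assumes x: "x \<in> space (PiM {..<m} (\<lambda>_. S))"
  shows "prob_space (smc_step S m l W K t x)"
  unfolding smc_step_def
proof (rule prob_space.prob_space_bind)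
  show "prob_space (PiM {..<m} (\<lambda>_. resample_measure m l W t x))"
    using m by (intro prob_space_PiM prob_space_resample_measure)
  show "(\<lambda>J. PiM {..<m} (\<lambda>i. K (Suc t) (x (J i))))
      \<in> PiM {..<m} (\<lambda>_. resample_measure m l W t x) \<rightarrow>\<^sub>M subprob_algebra (PiM {..<m} (\<lambda>_. S))"
    using x by (rule measurable_mutation_at)
  show "AE J in PiM {..<m} (\<lambda>_. resample_measure m l W t x). prob_space (PiM {..<m} (\<lambda>i. K (Suc t) (x (J i))))"
    using x by (intro AE_I2 prob_space_PiM K_prob) (auto simp: space_PiM space_point_measure)
qed

lemma space_kernel: "y \<in> space S \<Longrightarrow> space (K (Suc t) y) = space S"
  using sets_kernel[OF K_meas] by (rule sets_eq_imp_space_eq)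

lemma measurable_kernel: "y \<in> space S \<Longrightarrow> measurable (K (Suc t) y) N = measurable S N"
  by (rule measurable_cong_sets[OF sets_kernel[OF K_meas] refl])

lemma measurable_kernel_integral:
  fixes f :: "'a \<Rightarrow> real"
  assumes "f \<in> borel_measurable S"
  shows "(\<lambda>y. \<integral>z. f z \<partial>K (Suc t) y) \<in> borel_measurable S"
  by (rule measurable_compose[OF K_meas integral_measurable_subprob_algebra[OF assms]])

lemma abs_integral_kernel_le_1:
  fixes f :: "'a \<Rightarrow> real"
  assumes "f \<in> borel_measurable S" "\<And>z. z \<in> space S \<Longrightarrow> \<bar>f z\<bar> \<le> 1" "y \<in> space S"
  shows "\<bar>\<integral>z. f z \<partial>K (Suc t) y\<bar> \<le> 1"
  using assms by (intro prob_space_abs_integral_le_1 K_prob) (auto simp: space_kernel measurable_kernel)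

lemma mutation_mean_square_deviation_le:
  fixes f :: "'a \<Rightarrow> real"
  assumes f: "f \<in> borel_measurable S" "\<And>z. z \<in> space S \<Longrightarrow> \<bar>f z\<bar> \<le> 1"
    and xJ: "\<And>i. i < m \<Longrightarrow> x (J i) \<in> space S"
  shows "(\<integral>y. (emp_mean m f y - c)\<^sup>2 \<partial>PiM {..<m} (\<lambda>i. K (Suc t) (x (J i))))
     \<le> (emp_mean m (\<lambda>j. \<integral>z. f z \<partial>K (Suc t) (x j)) J - c)\<^sup>2 + 1 / m"
proof -
  have "(\<integral>y. (emp_mean m f y - c)\<^sup>2 \<partial>PiM {..<m} (\<lambda>i. K (Suc t) (x (J i))))
      \<le> ((\<Sum>i<m. \<integral>z. f z \<partial>K (Suc t) (x (J i))) / m - c)\<^sup>2 + 1 / m"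
    using f xJ by (intro PiM_emp_mean_square_deviation_le m K_prob) (auto simp: space_kernel measurable_kernel)
  then show ?thesis
    by (simp add: emp_mean_def)
qed

lemma smc_step_mean_square_deviation_le:
  fixes f :: "'a \<Rightarrow> real"
  assumes f_meas: "f \<in> borel_measurable S" and f_bound: "\<And>z. z \<in> space S \<Longrightarrow> \<bar>f z\<bar> \<le> 1"
    and x: "x \<in> space (PiM {..<m} (\<lambda>_. S))"
  shows "(\<integral>y. (emp_mean m f y - c)\<^sup>2 \<partial>smc_step S m l W K t x)
     \<le> ((\<Sum>j<m. smc_weight m l W t x j * (\<integral>z. f z \<partial>K (Suc t) (x j))) - c)\<^sup>2 + 2 / m"
proof -
  let ?Q = "PiM {..<m} (\<lambda>_. resample_measure m l W t x)"
  let ?G = "\<lambda>J. PiM {..<m} (\<lambda>i. K (Suc t) (x (J i)))"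
  define g where "g j = (\<integral>z. f z \<partial>K (Suc t) (x j))" for j
  have x_S: "x j \<in> space S" if "j < m" for j
    using x that by (auto simp: space_PiM)
  have g_bound: "\<bar>g j\<bar> \<le> 1" if "j < m" for j
    unfolding g_def using f_meas f_bound x_S[OF that] by (rule abs_integral_kernel_le_1)
  have Q_prob: "prob_space ?Q"
    using m by (intro prob_space_PiM prob_space_resample_measure)
  have J_range: "J i < m" if "J \<in> space ?Q" "i < m" for J i
    using that by (auto simp: space_PiM space_point_measure)
  have G_meas: "?G \<in> ?Q \<rightarrow>\<^sub>M subprob_algebra (PiM {..<m} (\<lambda>_. S))"
    using x by (rule measurable_mutation_at)
  have emp_g_int: "integrable ?Q (\<lambda>J. (emp_mean m g J - c)\<^sup>2)"
    using Q_prob g_bound m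
    by (intro integrable_emp_mean_square_deviation prob_space.finite_measure) (auto simp: space_point_measure)
  have const_int: "integrable ?Q (\<lambda>_. 1 / m)"
    using Q_prob by (intro finite_measure.integrable_const prob_space.finite_measure)
  have "(\<integral>y. (emp_mean m f y - c)\<^sup>2 \<partial>smc_step S m l W K t x)
      = (\<integral>J. (\<integral>y. (emp_mean m f y - c)\<^sup>2 \<partial>?G J) \<partial>?Q)"
    unfolding smc_step_def using f_meas f_bound
    by (intro integral_bind_bounded[where B="(1 + \<bar>c\<bar>)\<^sup>2" and K="PiM {..<m} (\<lambda>_. S)"]
        Q_prob G_meas abs_square_diff_le
        abs_emp_mean_le_1[OF m] borel_measurable_power borel_measurable_diff measurable_emp_mean measurable_const)
       (auto simp: space_PiM)
  also have "\<dots> \<le> (\<integral>J. (emp_mean m g J - c)\<^sup>2 + 1 / m \<partial>?Q)"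
  proof (rule integral_mono_AE')
    show "integrable ?Q (\<lambda>J. (emp_mean m g J - c)\<^sup>2 + 1 / m)"
      using emp_g_int const_int by (rule Bochner_Integration.integrable_add)
    show "AE J in ?Q. (\<integral>y. (emp_mean m f y - c)\<^sup>2 \<partial>?G J) \<le> (emp_mean m g J - c)\<^sup>2 + 1 / m"
      using f_meas f_bound x_S J_range unfolding g_def
      by (intro AE_I2 mutation_mean_square_deviation_le) auto
  qed simp
  also have "\<dots> = (\<integral>J. (emp_mean m g J - c)\<^sup>2 \<partial>?Q) + 1 / m"
    using emp_g_int const_int Q_prob by (simp add: prob_space.prob_space)
  also have "\<dots> \<le> ((\<Sum>j<m. smc_weight m l W t x j * g j) - c)\<^sup>2 + 2 / m"
    using resampling_mean_square_deviation_le[OF m, of g l W t x c] g_bound by simp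
  finally show ?thesis
    by (simp add: g_def)
qed

end

section \<open>Gibbs posteriors\<close>

lemma sets_gibbs [simp]: "sets (gibbs l V \<mu>) = sets \<mu>"
  by (simp add: gibbs_def)

lemma space_gibbs [simp]: "space (gibbs l V \<mu>) = space \<mu>"
  by (simp add: gibbs_def)

lemma gibbs_0: "prob_space \<mu> \<Longrightarrow> gibbs l 0 \<mu> = \<mu>"
  by (simp add: gibbs_def prob_space.prob_space density_1)

locale bounded_loss =
  fixes \<rho>0 :: "'a measure" and l :: "'a \<Rightarrow> real" and C :: real
  assumes prob_space_prior: "prob_space \<rho>0" and measurable_loss: "l \<in> borel_measurable \<rho>0"
    and loss_bounds: "\<And>x. x \<in> space \<rho>0 \<Longrightarrow> 0 \<le> l x \<and> l x \<le> C"
begin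

declare measurable_loss [measurable]

definition partition_function :: "real \<Rightarrow> real" where
  "partition_function V = (\<integral>x. exp (- V * l x) \<partial>\<rho>0)"

lemma integrable_exp_loss: "0 \<le> V \<Longrightarrow> integrable \<rho>0 (\<lambda>x. exp (- V * l x))"
  using loss_bounds by (intro finite_measure_integrable_bounded[where B=1] prob_space.finite_measure
      prob_space_prior) auto

lemma partition_function_pos:
  assumes "0 \<le> V" shows "0 < partition_function V"
proof -
  have "(\<integral>x. exp (- V * C) \<partial>\<rho>0) \<le> partition_function V"
    unfolding partition_function_def using assms loss_bounds prob_space_prior
    by (intro integral_mono integrable_exp_loss)
       (auto simp: prob_space.finite_measure finite_measure.integrable_const mult_left_mono)
  then have "exp (- V * C) \<le> partition_function V"
    using prob_space_prior by (simp add: prob_space.prob_space)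
  then show ?thesis
    by (meson exp_gt_zero less_le_trans)
qed

lemma gibbs_integral:
  assumes V: "0 \<le> V" and g: "g \<in> borel_measurable \<rho>0"
  shows "(\<integral>x. g x \<partial>gibbs l V \<rho>0) = (\<integral>x. exp (- V * l x) * g x \<partial>\<rho>0) / partition_function V"
proof -
  have "(\<integral>x. g x \<partial>gibbs l V \<rho>0) = (\<integral>x. (exp (- V * l x) / partition_function V) *\<^sub>R g x \<partial>\<rho>0)"
    unfolding gibbs_def partition_function_def[symmetric]
    using g partition_function_pos[OF V] by (intro integral_density) (auto intro!: AE_I2)
  then show ?thesis
    by (simp add: integral_divide_zero[symmetric] del: integral_divide_zero)
qed

lemma prob_space_gibbs:
  assumes V: "0 \<le> V" shows "prob_space (gibbs l V \<rho>0)"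
proof (rule prob_spaceI)
  have "emeasure (gibbs l V \<rho>0) (space (gibbs l V \<rho>0))
      = (\<integral>\<^sup>+x. ennreal (exp (- V * l x) / partition_function V) \<partial>\<rho>0)"
    unfolding gibbs_def partition_function_def[symmetric]
    by (subst emeasure_density) (auto intro!: nn_integral_cong simp: indicator_def)
  also have "\<dots> = ennreal (\<integral>x. exp (- V * l x) / partition_function V \<partial>\<rho>0)"
    using integrable_exp_loss[OF V] partition_function_pos[OF V]
    by (intro nn_integral_eq_integral) (auto intro!: AE_I2)
  also have "(\<integral>x. exp (- V * l x) / partition_function V \<partial>\<rho>0) = 1"
    using partition_function_pos[OF V] by (simp add: partition_function_def)
  finally show "emeasure (gibbs l V \<rho>0) (space (gibbs l V \<rho>0)) = 1"
    by simp
qed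

lemma gibbs_reweight:
  assumes Va: "0 \<le> Va" and Vb: "Va \<le> Vb" and g: "g \<in> borel_measurable \<rho>0"
  shows "(\<integral>x. g x \<partial>gibbs l Vb \<rho>0) =
     (\<integral>x. exp (- (Vb - Va) * l x) * g x \<partial>gibbs l Va \<rho>0) / (\<integral>x. exp (- (Vb - Va) * l x) \<partial>gibbs l Va \<rho>0)"
proof -
  have Vb0: "0 \<le> Vb" using Va Vb by simp
  have exp_split: "exp (- Va * l x) * (exp (- (Vb - Va) * l x) * h) = exp (- Vb * l x) * h" for x h
    by (simp add: mult.assoc[symmetric] exp_add[symmetric] algebra_simps)
  have "(\<integral>x. exp (- (Vb - Va) * l x) * g x \<partial>gibbs l Va \<rho>0)
      = (\<integral>x. exp (- Vb * l x) * g x \<partial>\<rho>0) / partition_function Va"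
    using g by (subst gibbs_integral[OF Va]) (simp_all only: exp_split, measurable)
  moreover have "(\<integral>x. exp (- (Vb - Va) * l x) \<partial>gibbs l Va \<rho>0) = partition_function Vb / partition_function Va"
    using exp_split[of _ 1] by (subst gibbs_integral[OF Va]) (simp_all add: partition_function_def)
  ultimately show ?thesis
    using partition_function_pos[OF Va] partition_function_pos[OF Vb0] gibbs_integral[OF Vb0 g] by simp
qed

end

section \<open>The error recursion\<close>

lemma quotient_diff_square_le:
  fixes A0 A1 B0 B1 e :: real
  assumes e: "0 < e" and A0: "1 \<le> e * A0" and B0: "0 < B0" and B1: "\<bar>B1\<bar> \<le> B0"
  shows "(A1 / A0 - B1 / B0)\<^sup>2 \<le> 2 * e\<^sup>2 * ((A1 - B1)\<^sup>2 + (A0 - B0)\<^sup>2)"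
proof -
  have A0_pos: "0 < A0"
    using A0 e by (metis zero_less_mult_pos zero_less_one less_le_trans)
  have "\<bar>B1 / B0\<bar> \<le> 1"
    using B0 B1 by (simp add: abs_divide divide_le_eq)
  then have "\<bar>(A0 - B0) * (B1 / B0)\<bar> \<le> \<bar>A0 - B0\<bar>"
    unfolding abs_mult by (rule mult_left_le) simp
  then have numerator: "\<bar>(A1 - B1) - (A0 - B0) * (B1 / B0)\<bar> \<le> \<bar>A1 - B1\<bar> + \<bar>A0 - B0\<bar>"
    by linarith
  have "\<bar>A1 / A0 - B1 / B0\<bar> = \<bar>(A1 - B1) - (A0 - B0) * (B1 / B0)\<bar> * (1 / A0)"
    using A0_pos B0 by (simp add: field_simps abs_divide)
  also have "\<dots> \<le> (\<bar>A1 - B1\<bar> + \<bar>A0 - B0\<bar>) * e"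
    using numerator A0 A0_pos by (intro mult_mono) (auto simp: divide_le_eq mult.commute)
  finally have "\<bar>A1 / A0 - B1 / B0\<bar> \<le> e * (\<bar>A1 - B1\<bar> + \<bar>A0 - B0\<bar>)"
    by (simp add: mult.commute)
  then have "\<bar>A1 / A0 - B1 / B0\<bar> \<le> \<bar>e * (\<bar>A1 - B1\<bar> + \<bar>A0 - B0\<bar>)\<bar>"
    by linarith
  then have "(A1 / A0 - B1 / B0)\<^sup>2 \<le> e\<^sup>2 * (\<bar>A1 - B1\<bar> + \<bar>A0 - B0\<bar>)\<^sup>2"
    by (simp only: abs_le_square_iff power_mult_distrib)
  also have "\<dots> \<le> e\<^sup>2 * (2 * ((A1 - B1)\<^sup>2 + (A0 - B0)\<^sup>2))"
    using zero_le_power2[of "\<bar>A1 - B1\<bar> - \<bar>A0 - B0\<bar>"]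
    unfolding power2_sum power2_diff power2_abs by (intro mult_left_mono) (smt (verit), simp)
  finally show ?thesis
    by (simp add: algebra_simps)
qed

definition smc_error_bound :: "(nat \<Rightarrow> real) \<Rightarrow> real \<Rightarrow> nat \<Rightarrow> real" where
  "smc_error_bound W C t = (\<Sum>s = 0..t. 6 ^ (t - s) * exp ((W t - W s) * C))"

lemma smc_error_bound_0 [simp]: "smc_error_bound W C 0 = 1"
  by (simp add: smc_error_bound_def)

lemma smc_error_bound_Suc:
  "smc_error_bound W C (Suc t) = 1 + 6 * exp ((W (Suc t) - W t) * C) * smc_error_bound W C t"
proof -
  have "6 ^ (Suc t - s) * exp ((W (Suc t) - W s) * C)
      = 6 * exp ((W (Suc t) - W t) * C) * (6 ^ (t - s) * exp ((W t - W s) * C))" if "s \<le> t" for s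
    using that by (simp add: Suc_diff_le exp_add[symmetric] algebra_simps)
  then show ?thesis
    unfolding smc_error_bound_def by (simp add: sum_distrib_left)
qed

lemma smc_error_bound_ge_1: "1 \<le> smc_error_bound W C t"
proof (induction t)
  case (Suc t)
  then show ?case
    by (simp add: smc_error_bound_Suc)
qed simp

text \<open>The constant 6 of the statement is simply one for which 4 x^2 + 2 \<le> (1 + 6 x)^2 holds for all x \<ge> 1.\<close>

lemma error_recursion_step:
  fixes e B \<beta> :: real and m :: nat
  assumes e: "1 \<le> e" and B: "1 \<le> B" and m: "0 < m" and \<beta>: "\<beta> \<le> B\<^sup>2 / m"
  shows "4 * e\<^sup>2 * \<beta> + 2 / m \<le> (1 + 6 * e * B)\<^sup>2 / m"
proof -
  have eB: "1 \<le> e * B"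
    using e B by (metis mult_mono' order_trans zero_le_one mult_1)
  have "4 * e\<^sup>2 * \<beta> + 2 / m \<le> 4 * e\<^sup>2 * (B\<^sup>2 / m) + 2 / m"
    using \<beta> by (intro add_right_mono mult_left_mono) auto
  also have "\<dots> = (4 * (e * B)\<^sup>2 + 2) / m"
    by (simp add: power_mult_distrib add_divide_distrib)
  also have "\<dots> \<le> (1 + 6 * e * B)\<^sup>2 / m"
  proof (rule divide_right_mono)
    have "1 * 1 \<le> (e * B) * (e * B)"
      using eB by (intro mult_mono) auto
    moreover have "(1 + 6 * e * B)\<^sup>2 = 1 + 12 * (e * B) + 36 * ((e * B) * (e * B))"
      by (simp add: power2_eq_square algebra_simps)
    ultimately show "4 * (e * B)\<^sup>2 + 2 \<le> (1 + 6 * e * B)\<^sup>2"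
      using eB unfolding power2_eq_square by linarith
  qed simp
  finally show ?thesis .
qed

lemma smc_h_le:
  fixes P :: "(nat \<Rightarrow> 'a) measure"
  assumes "0 \<le> B"
    and mse: "\<And>f. f \<in> borel_measurable S \<Longrightarrow> (\<And>x. x \<in> space S \<Longrightarrow> \<bar>f x\<bar> \<le> 1) \<Longrightarrow>
      (\<integral>x. (emp_mean m f x - (\<integral>y. f y \<partial>\<rho>))\<^sup>2 \<partial>P) \<le> B\<^sup>2 / m"
  shows "smc_h S m P \<rho> \<le> 1 / sqrt (real m) * B"
proof -
  have "{f \<in> borel_measurable S. \<forall>x\<in>space S. \<bar>f x\<bar> \<le> (1::real)} \<noteq> {}"
    by (auto intro!: exI[of _ "\<lambda>_. 0::real"])
  moreover have "sqrt (\<integral>x. (emp_mean m f x - (\<integral>y. f y \<partial>\<rho>))\<^sup>2 \<partial>P) \<le> 1 / sqrt (real m) * B"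
    if "f \<in> {f \<in> borel_measurable S. \<forall>x\<in>space S. \<bar>f x\<bar> \<le> 1}" for f
  proof -
    have "sqrt (\<integral>x. (emp_mean m f x - (\<integral>y. f y \<partial>\<rho>))\<^sup>2 \<partial>P) \<le> sqrt (B\<^sup>2 / m)"
      using that mse by (intro real_sqrt_le_mono) auto
    also have "\<dots> = 1 / sqrt (real m) * B"
      using assms(1) by (simp add: real_sqrt_divide)
    finally show ?thesis .
  qed
  ultimately show ?thesis
    unfolding smc_h_def by (intro cSUP_least) auto
qed

section \<open>Error propagation through the iterations\<close>

locale smc_setting =
  fixes S :: "'a measure" and \<rho>0 :: "'a measure" and l :: "'a \<Rightarrow> real" and C :: real
    and W :: "nat \<Rightarrow> real" and N :: nat and K :: "nat \<Rightarrow> 'a \<Rightarrow> 'a measure" and m :: nat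
  assumes prior: "prob_space \<rho>0" and prior_sets: "sets \<rho>0 = sets S"
    and l_meas: "l \<in> borel_measurable S"
    and l_bounds: "\<And>x. x \<in> space S \<Longrightarrow> 0 \<le> l x \<and> l x \<le> C"
    and W0: "W 0 = 0" and W_mono: "\<And>t. t < N \<Longrightarrow> W t < W (Suc t)"
    and K_meas: "\<And>t. t < N \<Longrightarrow> K (Suc t) \<in> S \<rightarrow>\<^sub>M subprob_algebra S"
    and K_prob: "\<And>t x. t < N \<Longrightarrow> x \<in> space S \<Longrightarrow> prob_space (K (Suc t) x)"
    and K_inv: "\<And>t. t < N \<Longrightarrow> gibbs l (W (Suc t)) \<rho>0 \<bind> K (Suc t) = gibbs l (W (Suc t)) \<rho>0"
    and m_pos: "0 < m"
begin

declare l_meas [measurable]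

abbreviation posterior :: "nat \<Rightarrow> 'a measure" where
  "posterior t \<equiv> gibbs l (W t) \<rho>0"

abbreviation reweight :: "nat \<Rightarrow> 'a \<Rightarrow> real" where
  "reweight t y \<equiv> exp (- (W (Suc t) - W t) * l y)"

lemma space_prior [simp]: "space \<rho>0 = space S"
  using prior_sets by (rule sets_eq_imp_space_eq)

lemma measurable_prior: "measurable \<rho>0 N' = measurable S N'"
  using prior_sets by (rule measurable_cong_sets) simp

sublocale bounded_loss \<rho>0 l C
  using prior l_meas l_bounds by (simp add: bounded_loss_def space_prior measurable_prior)

lemma sets_posterior [simp]: "sets (posterior t) = sets S"
  by (simp add: prior_sets)

lemma W_nonneg: "t \<le> N \<Longrightarrow> 0 \<le> W t"
proof (induction t)
  case (Suc t)
  then show ?case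
    using W_mono[of t] by simp
qed (simp add: W0)

lemma prob_space_posterior: "t \<le> N \<Longrightarrow> prob_space (posterior t)"
  by (intro prob_space_gibbs W_nonneg)

lemma step_kernel: "t < N \<Longrightarrow> smc_step_kernel S m l K t"
  using m_pos l_meas K_meas K_prob by (simp add: smc_step_kernel_def)

lemma reweight_bounds:
  assumes "t < N" "y \<in> space S"
  shows "exp (- (W (Suc t) - W t) * C) \<le> reweight t y" "reweight t y \<le> 1"
proof -
  have "0 \<le> W (Suc t) - W t" "l y \<le> C" "0 \<le> l y"
    using l_bounds[OF assms(2)] W_mono[OF assms(1)] by auto
  then show "exp (- (W (Suc t) - W t) * C) \<le> reweight t y" "reweight t y \<le> 1"
    by (simp_all add: mult_left_mono_neg mult_nonpos_nonneg)
qed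

lemma next_posterior_integral:
  fixes f :: "'a \<Rightarrow> real"
  assumes t: "t < N" and f_meas: "f \<in> borel_measurable S" and f_bound: "\<And>z. z \<in> space S \<Longrightarrow> \<bar>f z\<bar> \<le> 1"
  shows "(\<integral>y. f y \<partial>posterior (Suc t))
    = (\<integral>y. reweight t y * (\<integral>z. f z \<partial>K (Suc t) y) \<partial>posterior t) / (\<integral>y. reweight t y \<partial>posterior t)"
proof -
  interpret step: smc_step_kernel S m l W K t
    using step_kernel[OF t] .
  have "(\<integral>y. f y \<partial>posterior (Suc t)) = (\<integral>y. f y \<partial>(posterior (Suc t) \<bind> K (Suc t)))"
    by (simp add: K_inv t)
  also have "\<dots> = (\<integral>y. (\<integral>z. f z \<partial>K (Suc t) y) \<partial>posterior (Suc t))"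
    using t f_meas f_bound step.K_meas
    by (intro integral_bind_bounded prob_space_posterior) (auto simp: measurable_cong_sets[OF sets_posterior refl])
  also have "\<dots> = (\<integral>y. reweight t y * (\<integral>z. f z \<partial>K (Suc t) y) \<partial>posterior t) / (\<integral>y. reweight t y \<partial>posterior t)"
    using t W_nonneg W_mono[OF t] f_meas f_bound
    by (intro gibbs_reweight step.measurable_kernel_integral[simplified measurable_prior[symmetric]])
       (auto simp: space_prior measurable_prior less_imp_le intro: step.abs_integral_kernel_le_1)
  finally show ?thesis .
qed

lemma posterior_reweight_bounds:
  fixes h :: "'a \<Rightarrow> real"
  assumes t: "t < N" and h_meas: "h \<in> borel_measurable S" and h_bound: "\<And>z. z \<in> space S \<Longrightarrow> \<bar>h z\<bar> \<le> 1"
  shows "exp (- (W (Suc t) - W t) * C) \<le> (\<integral>y. reweight t y \<partial>posterior t)"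
    and "\<bar>\<integral>y. reweight t y * h y \<partial>posterior t\<bar> \<le> (\<integral>y. reweight t y \<partial>posterior t)"
proof -
  have prob: "prob_space (posterior t)"
    using t by (intro prob_space_posterior) simp
  then have fin: "finite_measure (posterior t)"
    by (rule prob_space.finite_measure)
  have reweight_meas: "reweight t \<in> borel_measurable (posterior t)"
    using l_meas by (simp add: measurable_cong_sets[OF sets_posterior refl])
  have reweight_int: "integrable (posterior t) (reweight t)"
    using reweight_bounds[OF t]
    by (intro finite_measure_integrable_bounded[OF fin reweight_meas, where B=1]) (auto simp: space_prior)
  have "(\<integral>y. exp (- (W (Suc t) - W t) * C) \<partial>posterior t) \<le> (\<integral>y. reweight t y \<partial>posterior t)"
    using reweight_bounds[OF t] by (intro integral_mono finite_measure.integrable_const[OF fin] reweight_int)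
      (auto simp: space_prior)
  then show "exp (- (W (Suc t) - W t) * C) \<le> (\<integral>y. reweight t y \<partial>posterior t)"
    using prob_space.prob_space[OF prob] by simp
  have bound: "\<bar>reweight t y * h y\<bar> \<le> reweight t y" if "y \<in> space S" for y
    using h_bound[OF that] by (simp add: abs_mult mult_left_le)
  have "integrable (posterior t) (\<lambda>y. reweight t y * h y)"
  proof (rule finite_measure_integrable_bounded[OF fin, where B=1])
    show "(\<lambda>y. reweight t y * h y) \<in> borel_measurable (posterior t)"
      unfolding measurable_cong_sets[OF sets_posterior refl] using h_meas by measurable
    show "\<bar>reweight t y * h y\<bar> \<le> 1" if "y \<in> space (posterior t)" for y
      using that by (intro order_trans[OF bound reweight_bounds(2)[OF t]]) simp_all
  qed
  then show "\<bar>\<integral>y. reweight t y * h y \<partial>posterior t\<bar> \<le> (\<integral>y. reweight t y \<partial>posterior t)"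
    using reweight_int bound by (intro integral_abs_bound[THEN order_trans] integral_mono) auto
qed

lemma smc_step_deviation_le:
  fixes f :: "'a \<Rightarrow> real"
  assumes t: "t < N" and f_meas: "f \<in> borel_measurable S" and f_bound: "\<And>z. z \<in> space S \<Longrightarrow> \<bar>f z\<bar> \<le> 1"
    and x: "x \<in> space (PiM {..<m} (\<lambda>_. S))"
  defines "g \<equiv> \<lambda>y. reweight t y * (\<integral>z. f z \<partial>K (Suc t) y)"
  shows "(\<integral>y. (emp_mean m f y - (\<integral>z. f z \<partial>posterior (Suc t)))\<^sup>2 \<partial>smc_step S m l W K t x)
    \<le> 2 * (exp ((W (Suc t) - W t) * C))\<^sup>2 * ((emp_mean m g x - (\<integral>y. g y \<partial>posterior t))\<^sup>2
        + (emp_mean m (reweight t) x - (\<integral>y. reweight t y \<partial>posterior t))\<^sup>2) + 2 / m"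
proof -
  interpret step: smc_step_kernel S m l W K t
    using step_kernel[OF t] .
  define e where "e = exp ((W (Suc t) - W t) * C)"
  have Kf_bound: "\<bar>\<integral>z. f z \<partial>K (Suc t) y\<bar> \<le> 1" if "y \<in> space S" for y
    using f_meas f_bound that by (rule step.abs_integral_kernel_le_1)
  have A0_bound: "1 \<le> e * emp_mean m (reweight t) x"
  proof -
    have "exp (- (W (Suc t) - W t) * C) \<le> emp_mean m (reweight t) x"
      using x m_pos reweight_bounds(1)[OF t] by (intro emp_mean_ge) (auto simp: space_PiM)
    then have "e * exp (- (W (Suc t) - W t) * C) \<le> e * emp_mean m (reweight t) x"
      unfolding e_def by (intro mult_left_mono) simp_all
    moreover have "e * exp (- (W (Suc t) - W t) * C) = 1"
      unfolding e_def mult_minus_left exp_minus by simp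
    ultimately show ?thesis
      by simp
  qed
  have B0_pos: "0 < (\<integral>y. reweight t y \<partial>posterior t)"
    using posterior_reweight_bounds(1)[OF t f_meas f_bound] by (meson exp_gt_zero less_le_trans)
  have B1_bound: "\<bar>\<integral>y. g y \<partial>posterior t\<bar> \<le> (\<integral>y. reweight t y \<partial>posterior t)"
    unfolding g_def using Kf_bound f_meas
    by (intro posterior_reweight_bounds(2)[OF t] step.measurable_kernel_integral) auto
  have "((\<Sum>j<m. smc_weight m l W t x j * (\<integral>z. f z \<partial>K (Suc t) (x j))) - (\<integral>z. f z \<partial>posterior (Suc t)))\<^sup>2
      \<le> 2 * e\<^sup>2 * ((emp_mean m g x - (\<integral>y. g y \<partial>posterior t))\<^sup>2
        + (emp_mean m (reweight t) x - (\<integral>y. reweight t y \<partial>posterior t))\<^sup>2)"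
  proof -
    have "(\<Sum>j<m. smc_weight m l W t x j * (\<integral>z. f z \<partial>K (Suc t) (x j))) = emp_mean m g x / emp_mean m (reweight t) x"
      unfolding g_def by (rule sum_smc_weight_mult[OF m_pos])
    moreover have "(\<integral>z. f z \<partial>posterior (Suc t)) = (\<integral>y. g y \<partial>posterior t) / (\<integral>y. reweight t y \<partial>posterior t)"
      unfolding g_def by (rule next_posterior_integral[OF t f_meas f_bound])
    ultimately show ?thesis
      using quotient_diff_square_le[OF _ A0_bound B0_pos B1_bound] by (simp add: e_def)
  qed
  then show ?thesis
    using step.smc_step_mean_square_deviation_le[OF f_meas f_bound x, of "\<integral>z. f z \<partial>posterior (Suc t)"]
    unfolding e_def by linarith
qed

lemma smc_step_mean_square_error_le:
  fixes f :: "'a \<Rightarrow> real" and P :: "(nat \<Rightarrow> 'a) measure"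
  assumes t: "t < N" and P_sets: "sets P = sets (PiM {..<m} (\<lambda>_. S))" and P_prob: "prob_space P"
    and error_t: "\<And>g. g \<in> borel_measurable S \<Longrightarrow> (\<And>z. z \<in> space S \<Longrightarrow> \<bar>g z\<bar> \<le> 1) \<Longrightarrow>
        (\<integral>x. (emp_mean m g x - (\<integral>y. g y \<partial>posterior t))\<^sup>2 \<partial>P) \<le> \<beta>"
    and f_meas: "f \<in> borel_measurable S" and f_bound: "\<And>z. z \<in> space S \<Longrightarrow> \<bar>f z\<bar> \<le> 1"
  shows "(\<integral>x. (emp_mean m f x - (\<integral>y. f y \<partial>posterior (Suc t)))\<^sup>2 \<partial>(P \<bind> smc_step S m l W K t))
     \<le> 4 * (exp ((W (Suc t) - W t) * C))\<^sup>2 * \<beta> + 2 / m"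
proof -
  interpret step: smc_step_kernel S m l W K t
    using step_kernel[OF t] .
  define e where "e = exp ((W (Suc t) - W t) * C)"
  define g where "g y = reweight t y * (\<integral>z. f z \<partial>K (Suc t) y)" for y
  define dev where "dev h x = (emp_mean m h x - (\<integral>y. h y \<partial>posterior t))\<^sup>2" for h x
  have P_fin: "finite_measure P"
    using P_prob by (rule prob_space.finite_measure)
  have g_meas: "g \<in> borel_measurable S"
    unfolding g_def using step.measurable_kernel_integral[OF f_meas] by measurable
  have reweight_bound: "\<bar>reweight t y\<bar> \<le> 1" if "y \<in> space S" for y
    using reweight_bounds(2)[OF t that] by simp
  have g_bound: "\<bar>g y\<bar> \<le> 1" if "y \<in> space S" for y
    unfolding g_def abs_mult using reweight_bound[OF that] step.abs_integral_kernel_le_1[OF f_meas f_bound that]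
    by (intro mult_le_one) auto
  have reweight_meas: "reweight t \<in> borel_measurable S"
    by measurable
  have dev_int: "integrable P (dev g)" "integrable P (dev (reweight t))"
    unfolding dev_def using P_fin P_sets m_pos g_meas g_bound reweight_meas reweight_bound
    by (auto intro!: integrable_emp_mean_square_deviation)
  have "(\<integral>x. (emp_mean m f x - (\<integral>y. f y \<partial>posterior (Suc t)))\<^sup>2 \<partial>(P \<bind> smc_step S m l W K t))
      = (\<integral>x. (\<integral>y. (emp_mean m f y - (\<integral>y. f y \<partial>posterior (Suc t)))\<^sup>2 \<partial>smc_step S m l W K t x) \<partial>P)"
    using P_prob step.measurable_smc_step f_meas f_bound m_pos
    by (intro integral_bind_bounded[where B="(1 + \<bar>\<integral>y. f y \<partial>posterior (Suc t)\<bar>)\<^sup>2"] abs_square_diff_le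
        abs_emp_mean_le_1 borel_measurable_power borel_measurable_diff measurable_emp_mean measurable_const)
       (auto simp: measurable_cong_sets[OF P_sets refl] space_PiM PiE_iff intro: measurable_emp_mean f_bound)
  also have "\<dots> \<le> (\<integral>x. 2 * e\<^sup>2 * (dev g x + dev (reweight t) x) + 2 / m \<partial>P)"
  proof (rule integral_mono_AE')
    show "integrable P (\<lambda>x. 2 * e\<^sup>2 * (dev g x + dev (reweight t) x) + 2 / m)"
      using dev_int P_fin by (intro Bochner_Integration.integrable_add integrable_mult_right finite_measure.integrable_const)
    show "AE x in P. (\<integral>y. (emp_mean m f y - (\<integral>y. f y \<partial>posterior (Suc t)))\<^sup>2 \<partial>smc_step S m l W K t x)
        \<le> 2 * e\<^sup>2 * (dev g x + dev (reweight t) x) + 2 / m"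
      using smc_step_deviation_le[OF t f_meas f_bound] sets_eq_imp_space_eq[OF P_sets]
      unfolding e_def dev_def g_def[abs_def] by (intro AE_I2) simp
  qed (simp add: dev_def)
  also have "\<dots> = 2 * e\<^sup>2 * ((\<integral>x. dev g x \<partial>P) + (\<integral>x. dev (reweight t) x \<partial>P)) + 2 / m"
    using dev_int P_fin P_prob by (simp add: prob_space.prob_space finite_measure.integrable_const)
  also have "\<dots> \<le> 2 * e\<^sup>2 * (\<beta> + \<beta>) + 2 / m"
    unfolding dev_def using g_meas g_bound reweight_meas reweight_bound
    by (intro add_right_mono mult_left_mono add_mono error_t) auto
  finally show ?thesis
    by (simp add: e_def)
qed

lemma C_nonneg: "0 \<le> C"
proof -
  obtain x where "x \<in> space S"
    using prob_space.not_empty[OF prior] by auto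
  then show ?thesis
    using l_bounds by force
qed

lemma smc_law_sets_prob:
  assumes "t \<le> N"
  shows "sets (smc_law S m l W K \<rho>0 t) = sets (PiM {..<m} (\<lambda>_. S)) \<and> prob_space (smc_law S m l W K \<rho>0 t)"
  using assms
proof (induction t)
  case 0
  show ?case
    using prior prior_sets by (auto intro!: sets_PiM_cong prob_space_PiM)
next
  case (Suc t)
  then have t: "t < N" and sets_t: "sets (smc_law S m l W K \<rho>0 t) = sets (PiM {..<m} (\<lambda>_. S))"
    and prob_t: "prob_space (smc_law S m l W K \<rho>0 t)"
    by auto
  interpret step: smc_step_kernel S m l W K t
    using step_kernel[OF t] .
  have step_meas: "smc_step S m l W K t \<in> smc_law S m l W K \<rho>0 t \<rightarrow>\<^sub>M subprob_algebra (PiM {..<m} (\<lambda>_. S))"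
    using step.measurable_smc_step by (simp add: measurable_cong_sets[OF sets_t refl])
  have "sets (smc_law S m l W K \<rho>0 (Suc t)) = sets (PiM {..<m} (\<lambda>_. S))"
    using step_meas prob_space.not_empty[OF prob_t] by (simp add: sets_bind_measurable)
  moreover have "prob_space (smc_law S m l W K \<rho>0 (Suc t))"
    using prob_t step_meas sets_eq_imp_space_eq[OF sets_t]
    by (simp, intro prob_space.prob_space_bind AE_I2 step.prob_space_smc_step) auto
  ultimately show ?case ..
qed

lemma smc_law_mean_square_error_le:
  fixes f :: "'a \<Rightarrow> real"
  assumes "t \<le> N" and "f \<in> borel_measurable S" and "\<And>z. z \<in> space S \<Longrightarrow> \<bar>f z\<bar> \<le> 1"
  shows "(\<integral>x. (emp_mean m f x - (\<integral>y. f y \<partial>posterior t))\<^sup>2 \<partial>smc_law S m l W K \<rho>0 t)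
    \<le> (smc_error_bound W C t)\<^sup>2 / m"
  using assms
proof (induction t arbitrary: f)
  case 0
  have "(\<integral>x. (emp_mean m f x - (\<integral>y. f y \<partial>\<rho>0))\<^sup>2 \<partial>PiM {..<m} (\<lambda>_. \<rho>0))
      \<le> ((\<Sum>i<m. \<integral>y. f y \<partial>\<rho>0) / m - (\<integral>y. f y \<partial>\<rho>0))\<^sup>2 + 1 / m"
    using m_pos prior 0 by (intro PiM_emp_mean_square_deviation_le) (auto simp: measurable_prior)
  then show ?case
    using m_pos by (simp add: W0 gibbs_0[OF prior])
next
  case (Suc t)
  then have t: "t < N"
    by simp
  let ?e = "exp ((W (Suc t) - W t) * C)" and ?B = "smc_error_bound W C t"
  have "(\<integral>x. (emp_mean m f x - (\<integral>y. f y \<partial>posterior (Suc t)))\<^sup>2 \<partial>smc_law S m l W K \<rho>0 (Suc t))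
      \<le> 4 * ?e\<^sup>2 * (?B\<^sup>2 / m) + 2 / m"
    unfolding smc_law.simps(2) using smc_law_sets_prob[of t] t Suc
    by (intro smc_step_mean_square_error_le) auto
  also have "\<dots> \<le> (1 + 6 * ?e * ?B)\<^sup>2 / m"
    using W_mono[OF t] C_nonneg m_pos smc_error_bound_ge_1 by (intro error_recursion_step) auto
  finally show ?case
    by (simp add: smc_error_bound_Suc)
qed

theorem smc_h_le_error_bound:
  assumes "t \<le> N"
  shows "smc_h S m (smc_law S m l W K \<rho>0 t) (posterior t) \<le> 1 / sqrt (real m) * smc_error_bound W C t"
  using smc_error_bound_ge_1[of W C t] smc_law_mean_square_error_le[OF assms]
  by (intro smc_h_le) auto

end

theorem mainTheorem8:
  fixes \<Xi> :: "(real ^ 'M) set"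
    and \<rho>0 :: "(real ^ 'M) measure"
    and l :: "real ^ 'M \<Rightarrow> real"
    and Cl :: real
    and Wfin :: real
    and W :: "nat \<Rightarrow> real"
    and N m :: nat
    and K :: "nat \<Rightarrow> real ^ 'M \<Rightarrow> (real ^ 'M) measure"
  defines "S \<equiv> restrict_space borel \<Xi>"
  defines "\<rho> \<equiv> (\<lambda>t. gibbs l (W t) \<rho>0)"
  assumes prior: "prob_space \<rho>0" and prior_sets: "sets \<rho>0 = sets S"
    and l_meas: "l \<in> borel_measurable S"
    and l_bounds: "\<And>\<xi>. \<xi> \<in> \<Xi> \<Longrightarrow> 0 \<le> l \<xi> \<and> l \<xi> \<le> Cl"
    and Wpos: "Wfin > 0"
    and W0: "W 0 = 0" and WN: "W N = Wfin"
    and Wmono: "\<And>t. t < N \<Longrightarrow> W t < W (Suc t)"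
    and K_meas: "\<And>t. t < N \<Longrightarrow> K (Suc t) \<in> S \<rightarrow>\<^sub>M subprob_algebra S"
    and K_prob: "\<And>t x. t < N \<Longrightarrow> x \<in> space S \<Longrightarrow> prob_space (K (Suc t) x)"
    and K_inv: "\<And>t. t < N \<Longrightarrow> \<rho> (Suc t) \<bind> K (Suc t) = \<rho> (Suc t)"
    and m_pos: "m > 0"
  shows "(\<forall>t < N. smc_h S m (smc_law S m l W K \<rho>0 (Suc t)) (\<rho> (Suc t))
            \<le> 1 / sqrt (real m) * (\<Sum>s = 0..Suc t. 6 ^ (Suc t - s) * exp ((W (Suc t) - W s) * Cl)))
       \<and> smc_h S m (smc_law S m l W K \<rho>0 N) (\<rho> N)
            \<le> 1 / sqrt (real m) * (\<Sum>s = 0..N. 6 ^ (N - s) * exp ((Wfin - W s) * Cl))"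
proof -
  have space_S: "space S = \<Xi>"
    by (simp add: S_def space_restrict_space)
  interpret smc_setting S \<rho>0 l Cl W N K m
    using prior prior_sets l_meas l_bounds W0 Wmono K_meas K_prob K_inv m_pos
    unfolding smc_setting_def space_S \<rho>_def by blast
  have "smc_h S m (smc_law S m l W K \<rho>0 t) (\<rho> t)
      \<le> 1 / sqrt (real m) * (\<Sum>s = 0..t. 6 ^ (t - s) * exp ((W t - W s) * Cl))" if "t \<le> N" for t
    using smc_h_le_error_bound[OF that] unfolding smc_error_bound_def \<rho>_def .
  then show ?thesis
    unfolding WN[symmetric] by (auto simp only: Suc_le_eq order.refl)
qed

end
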